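(* Let $Z$ be a random real symmetric $d\times d$ Gaussian matrix such that $\operatorname{Var}[a^{\mathsf T}Za]\le\beta^2\|a\|^4$ for each $a\in\mathbb{R}^d$. Then \[ \mathbb{E}\|Z-\mathbb{E}Z\|\le\sqrt{12\beta^2d}\qquad\text{and}\qquad\sigma_*^2(Z)\le\beta^2, \] where $\sigma_*^2(Z)=\max_{\|u\|=1}\operatorname{Var}[u^{\mathsf T}Zu]$.
   Context: A random real symmetric matrix is Gaussian if its entries are jointly Gaussian. $\|\cdot\|$ on matrices is the spectral (operator) norm. *)

theory Defs
  imports "HOL-Probability.Probability"
begin

definition gaussian_rv :: "'a measure \<Rightarrow> ('a \<Rightarrow> real) \<Rightarrow> bool" where
  "gaussian_rv M X \<longleftrightarrow> X \<in> borel_measurable M \<and>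
     ((\<exists>c. AE \<omega> in M. X \<omega> = c) \<or>
      (\<exists>\<mu> \<sigma>. \<sigma> > 0 \<and> distributed M lborel X (normal_density \<mu> \<sigma>)))"

text \<open>A random matrix is Gaussian if its entries are jointly Gaussian, i.e. every
  real linear combination of its entries is a Gaussian random variable.\<close>
definition gaussian_matrix :: "'a measure \<Rightarrow> ('a \<Rightarrow> real^'n^'m) \<Rightarrow> bool" where
  "gaussian_matrix M Z \<longleftrightarrow> Z \<in> borel_measurable M \<and>
     (\<forall>c :: real^'n^'m. gaussian_rv M (\<lambda>\<omega>. \<Sum>i\<in>UNIV. \<Sum>j\<in>UNIV. c$i$j * Z \<omega> $i$j))"

definition spec_norm :: "real^'n^'m \<Rightarrow> real" where
  "spec_norm A = onorm (\<lambda>x. A *v x)"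

definition sigma_star_sq :: "'a measure \<Rightarrow> ('a \<Rightarrow> real^'n^'n) \<Rightarrow> real" where
  "sigma_star_sq M Z = (SUP u\<in>{u :: real^'n. norm u = 1}. prob_space.variance M (\<lambda>\<omega>. u \<bullet> (Z \<omega> *v u)))"

end

theory Submission
  imports Defs
begin

text \<open>For symmetric \<open>A\<close> the spectral norm is controlled by the quadratic form on an
  \<open>e\<close>-net \<open>F\<close> of the unit sphere, \<open>spec_norm A \<le> (MAX v\<in>F. \<bar>v \<bullet> (A *v v)\<bar>) / (1 - 2 * e)\<close>,
  and a volume argument yields such a net with at most \<open>(1 + 2/e) ^ d\<close> points. For Gaussian
  \<open>Z\<close>, each centred quadratic form \<open>v \<bullet> ((Z - E Z) *v v)\<close> with \<open>norm v = 1\<close> is a centred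
  Gaussian of variance at most \<open>\<beta>\<^sup>2\<close>, so its moment generating function is at most
  \<open>exp (t\<^sup>2 * \<beta>\<^sup>2 / 2)\<close>, and the exponential moment method bounds the expected maximum of
  \<open>N\<close> such variables in absolute value by \<open>sqrt (2 * \<beta>\<^sup>2 * ln (2 * N))\<close>. With \<open>e = 2/31\<close>
  the constants combine to \<open>sqrt (12 * \<beta>\<^sup>2 * d)\<close>.\<close>

section \<open>Nets of the unit sphere\<close>

lemma card_le_if_separated_on_sphere:
  fixes F :: "'a::euclidean_space set"
  assumes e: "0 < e" and "finite F" and F_sphere: "F \<subseteq> sphere 0 1"
    and separated: "pairwise (\<lambda>x y. e < dist x y) F"
  shows "real (card F) \<le> (1 + 2/e) ^ DIM('a)"
proof -
  define r where "r = e/2"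
  have r: "r > 0" using e by (simp add: r_def)
  define V where "V = measure lborel (ball (0::'a) 1)"
  have V: "V > 0" unfolding V_def by (simp add: content_ball_pos)
  have vol_ball: "measure lborel (ball x \<rho>) = \<rho> ^ DIM('a) * V" if "\<rho> \<ge> 0" for x :: 'a and \<rho>
    using content_ball_conv_unit_ball[OF that] by (simp add: V_def)
  have ball_fmeasurable: "ball x \<rho> \<in> fmeasurable lborel" for x :: 'a and \<rho>
    using emeasure_lborel_ball_finite by (auto simp: fmeasurable_def)
  have disjoint: "pairwise (\<lambda>x y. disjnt (ball x r) (ball y r)) F"
  proof (rule pairwise_mono[OF separated])
    fix x y :: 'a
    assume "e < dist x y"
    then show "disjnt (ball x r) (ball y r)"
      unfolding disjnt_def r_def using dist_triangle_half_l by fastforce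
  qed simp
  have "real (card F) * (r ^ DIM('a) * V) = measure lborel (\<Union>x\<in>F. ball x r)"
    using measure_UNION'[OF \<open>finite F\<close> ball_fmeasurable disjoint] r by (simp add: vol_ball)
  also have "\<dots> \<le> measure lborel (ball (0::'a) (1 + r))"
  proof (rule measure_mono_fmeasurable)
    show "(\<Union>x\<in>F. ball x r) \<subseteq> ball 0 (1 + r)"
    proof clarify
      fix x z
      assume "x \<in> F" "z \<in> ball x r"
      then have "norm x = 1" "norm (z - x) < r"
        using F_sphere by (auto simp: dist_norm norm_minus_commute)
      then show "z \<in> ball 0 (1 + r)"
        using norm_triangle_sub[of z x] by simp
    qed
  qed (use \<open>finite F\<close> ball_fmeasurable in auto)
  also have "\<dots> = (1 + r) ^ DIM('a) * V"
    using r by (simp add: vol_ball)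
  finally have "real (card F) * r ^ DIM('a) \<le> (1 + r) ^ DIM('a)"
    using V by (simp add: mult.assoc)
  then have "real (card F) \<le> ((1 + r) / r) ^ DIM('a)"
    using r by (simp add: power_divide field_simps)
  also have "(1 + r) / r = 1 + 2/e"
    using e by (simp add: r_def field_simps)
  finally show ?thesis .
qed

text \<open>A maximal \<open>e\<close>-separated subset of the sphere is an \<open>e\<close>-net; maximal ones exist
  because the cardinality of separated subsets is bounded.\<close>
lemma obtain_sphere_net:
  fixes e :: real
  assumes e: "0 < e"
  obtains F :: "'a::euclidean_space set"
  where "finite F" "F \<subseteq> sphere 0 1" "real (card F) \<le> (1 + 2/e) ^ DIM('a)"
    "\<And>u. u \<in> sphere 0 1 \<Longrightarrow> \<exists>v\<in>F. dist u v \<le> e"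
proof -
  define separated where
    "separated F \<longleftrightarrow> F \<subseteq> sphere (0::'a) 1 \<and> pairwise (\<lambda>x y. e < dist x y) F" for F
  define B where "B = nat \<lceil>(1 + 2/e) ^ DIM('a)\<rceil>"
  have finite: "finite F" if "separated F" for F
  proof (rule ccontr)
    assume "infinite F"
    then obtain G where G: "G \<subseteq> F" "finite G" "card G = B + 1"
      using infinite_arbitrarily_large by blast
    then have "separated G"
      using that unfolding separated_def by (auto intro: pairwise_subset)
    then have "real (card G) \<le> (1 + 2/e) ^ DIM('a)"
      using card_le_if_separated_on_sphere[OF e \<open>finite G\<close>] unfolding separated_def by blast
    then show False
      using G(3) unfolding B_def by linarith
  qed
  have card_le: "real (card F) \<le> (1 + 2/e) ^ DIM('a)" if "separated F" for F
    using card_le_if_separated_on_sphere[OF e finite[OF that]] that unfolding separated_def by blast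
  then have "card F < B + 1" if "separated F" for F
    using that unfolding B_def by (smt (verit) Suc_eq_plus1 less_Suc_eq_le of_nat_le_iff real_nat_ceiling_ge)
  moreover have "separated {}"
    unfolding separated_def by simp
  ultimately obtain F where F: "separated F" and maximal: "\<And>G. separated G \<Longrightarrow> card G \<le> card F"
    using ex_has_greatest_nat[of separated "{}" card "B + 1"] by blast
  have "\<exists>v\<in>F. dist u v \<le> e" if u: "u \<in> sphere 0 1" for u
  proof (rule ccontr)
    assume "\<not> ?thesis"
    then have far: "\<forall>v\<in>F. e < dist u v" by auto
    then have "separated (insert u F)"
      using F u unfolding separated_def by (auto simp: pairwise_insert dist_commute)
    then have "card (insert u F) \<le> card F" by (rule maximal)
    moreover have "u \<notin> F" using far e by auto
    ultimately show False using finite[OF F] by simp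
  qed
  then show thesis
    using that finite[OF F] card_le[OF F] F unfolding separated_def by blast
qed

section \<open>Spectral norm of symmetric matrices\<close>

lemma norm_matrix_vector_le_spec_norm: "norm (A *v x) \<le> spec_norm A * norm x"
  unfolding spec_norm_def by (rule onorm) simp

lemma spec_norm_nonneg: "0 \<le> spec_norm A"
  unfolding spec_norm_def by (rule onorm_pos_le) simp

lemma inner_matrix_vector_symmetric:
  fixes A :: "real^'n^'n"
  assumes "transpose A = A"
  shows "x \<bullet> (A *v y) = (A *v x) \<bullet> y"
  by (metis assms dot_lmul_matrix transpose_matrix_vector)

lemma quadratic_form_diff:
  fixes A :: "real^'n^'n"
  assumes "transpose A = A"
  shows "(u - v) \<bullet> (A *v (u + v)) = u \<bullet> (A *v u) - v \<bullet> (A *v v)"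
proof -
  have "u \<bullet> (A *v v) = v \<bullet> (A *v u)"
    using inner_matrix_vector_symmetric[OF assms, of u v] by (simp add: inner_commute)
  then show ?thesis
    by (simp add: matrix_vector_right_distrib inner_diff_left inner_add_right)
qed

lemma quadratic_form_polarization:
  fixes A :: "real^'n^'n"
  assumes "transpose A = A"
  shows "4 * (x \<bullet> (A *v y)) = (x + y) \<bullet> (A *v (x + y)) - (x - y) \<bullet> (A *v (x - y))"
  using inner_matrix_vector_symmetric[OF assms, of y x]
  by (simp add: matrix_vector_right_distrib matrix_vector_mult_diff_distrib
      inner_diff_left inner_add_right inner_diff_right inner_add_left inner_commute)

lemma abs_quadratic_form_le:
  fixes A :: "real^'n^'n"
  assumes unit: "\<And>u. norm u = 1 \<Longrightarrow> \<bar>u \<bullet> (A *v u)\<bar> \<le> K"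
  shows "\<bar>x \<bullet> (A *v x)\<bar> \<le> K * (norm x)\<^sup>2"
proof (cases "x = 0")
  case False
  define u where "u = x /\<^sub>R norm x"
  have "x = norm x *\<^sub>R u"
    using False by (simp add: u_def)
  then have "x \<bullet> (A *v x) = (norm x)\<^sup>2 * (u \<bullet> (A *v u))"
    by (metis inner_scaleR_left inner_scaleR_right matrix_vector_mult_scaleR power2_eq_square
        mult.assoc)
  moreover have "norm u = 1"
    using False by (simp add: u_def)
  ultimately show ?thesis
    using unit[of u] by (simp add: abs_mult mult.commute mult_right_mono)
qed simp

text \<open>For symmetric \<open>A\<close> the spectral norm is attained by the quadratic form: polarize
  \<open>x \<bullet> (A *v y)\<close> with \<open>y\<close> the rescaling of \<open>A *v x\<close> to the length of \<open>x\<close>.\<close>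
lemma spec_norm_symmetric_le:
  fixes A :: "real^'n^'n"
  assumes sym: "transpose A = A" and unit: "\<And>u. norm u = 1 \<Longrightarrow> \<bar>u \<bullet> (A *v u)\<bar> \<le> K"
  shows "spec_norm A \<le> K"
  unfolding spec_norm_def
proof (rule onorm_le)
  fix x :: "real^'n"
  have quad: "\<bar>z \<bullet> (A *v z)\<bar> \<le> K * (norm z)\<^sup>2" for z
    by (rule abs_quadratic_form_le[OF unit])
  show "norm (A *v x) \<le> K * norm x"
  proof (cases "A *v x = 0")
    case True
    obtain u :: "real^'n" where "norm u = 1"
      using vector_choose_size[of 1] by auto
    then have "K \<ge> 0" using unit[of u] by linarith
    then show ?thesis using True by simp
  next
    case False
    define y where "y = (norm x / norm (A *v x)) *\<^sub>R (A *v x)"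
    have "norm y = norm x"
      using False by (simp add: y_def)
    have "x \<bullet> (A *v y) = (A *v x) \<bullet> y"
      by (rule inner_matrix_vector_symmetric[OF sym])
    also have "\<dots> = norm x * norm (A *v x)"
      using False by (simp add: y_def power2_norm_eq_inner[symmetric] power2_eq_square)
    finally have "4 * (norm x * norm (A *v x)) \<le> K * (norm (x + y))\<^sup>2 + K * (norm (x - y))\<^sup>2"
      using quadratic_form_polarization[OF sym, of x y] quad[of "x + y"] quad[of "x - y"] by linarith
    also have "\<dots> = K * (2 * (norm x)\<^sup>2 + 2 * (norm y)\<^sup>2)"
      by (simp add: power2_norm_eq_inner inner_add_left inner_add_right inner_diff_left
          inner_diff_right inner_commute algebra_simps)
    finally have "4 * (norm x * norm (A *v x)) \<le> 4 * (norm x * (K * norm x))"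
      using \<open>norm y = norm x\<close> by (simp add: power2_eq_square algebra_simps)
    moreover have "x \<noteq> 0"
      using False by auto
    ultimately show ?thesis
      by simp
  qed
qed

text \<open>On the sphere, \<open>u \<bullet> (A *v u)\<close> is \<open>2 * spec_norm A\<close>-Lipschitz, so an \<open>e\<close>-net
  controls it up to the error \<open>2 * e * spec_norm A\<close>, which is then absorbed.\<close>
lemma spec_norm_symmetric_le_net:
  fixes A :: "real^'n^'n"
  assumes sym: "transpose A = A" and e: "0 \<le> e" "e < 1/2"
    and F_sphere: "F \<subseteq> sphere 0 1" and net: "\<And>u. u \<in> sphere 0 1 \<Longrightarrow> \<exists>v\<in>F. dist u v \<le> e"
    and bound: "\<And>v. v \<in> F \<Longrightarrow> \<bar>v \<bullet> (A *v v)\<bar> \<le> m"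
  shows "spec_norm A \<le> m / (1 - 2 * e)"
proof -
  have "\<bar>u \<bullet> (A *v u)\<bar> \<le> m + 2 * e * spec_norm A" if u: "norm u = 1" for u
  proof -
    obtain v where v: "v \<in> F" "norm (u - v) \<le> e"
      using net[of u] u by (auto simp: dist_norm)
    have "norm (u + v) \<le> 2"
      using norm_triangle_ineq[of u v] u v(1) F_sphere by auto
    have "\<bar>u \<bullet> (A *v u) - v \<bullet> (A *v v)\<bar> = \<bar>(u - v) \<bullet> (A *v (u + v))\<bar>"
      by (simp add: quadratic_form_diff[OF sym])
    also have "\<dots> \<le> norm (u - v) * (spec_norm A * norm (u + v))"
      using Cauchy_Schwarz_ineq2 norm_matrix_vector_le_spec_norm
      by (smt (verit) mult_left_mono norm_ge_zero)
    also have "\<dots> \<le> e * (spec_norm A * 2)"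
      using v(2) \<open>norm (u + v) \<le> 2\<close> spec_norm_nonneg[of A] e(1)
      by (intro mult_mono mult_left_mono) auto
    finally show ?thesis
      using bound[OF v(1)] by linarith
  qed
  then have "spec_norm A \<le> m + 2 * e * spec_norm A"
    by (rule spec_norm_symmetric_le[OF sym])
  then show ?thesis
    using e by (simp add: field_simps)
qed

text \<open>With \<open>e = 2/31\<close> one has \<open>1 + 2/e = 32\<close> and \<open>1/(1 - 2 * e) = 31/27\<close>.\<close>
lemma obtain_spec_norm_net:
  obtains F :: "(real^'n) set"
  where "finite F" "F \<noteq> {}" "F \<subseteq> sphere 0 1" "real (card F) \<le> 32 ^ CARD('n)"
    "\<And>A :: real^'n^'n. transpose A = A \<Longrightarrow> spec_norm A \<le> 31/27 * (MAX v\<in>F. \<bar>v \<bullet> (A *v v)\<bar>)"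
proof -
  have "(0::real) < 2/31"
    by simp
  then obtain F :: "(real^'n) set" where F: "finite F" "F \<subseteq> sphere 0 1"
    "real (card F) \<le> (1 + 2 / (2/31)) ^ DIM(real^'n)"
    and net: "\<And>u. u \<in> sphere 0 1 \<Longrightarrow> \<exists>v\<in>F. dist u v \<le> 2/31"
    using obtain_sphere_net[where 'a = "real^'n"] by blast
  obtain u :: "real^'n" where "norm u = 1"
    using vector_choose_size[of 1] by auto
  then have "F \<noteq> {}"
    using net[of u] by auto
  have "real (card F) \<le> 32 ^ CARD('n)"
    using F(3) by simp
  moreover have "spec_norm A \<le> 31/27 * (MAX v\<in>F. \<bar>v \<bullet> (A *v v)\<bar>)" if "transpose A = A" for A :: "real^'n^'n"
  proof -
    have "\<bar>v \<bullet> (A *v v)\<bar> \<le> (MAX v\<in>F. \<bar>v \<bullet> (A *v v)\<bar>)" if "v \<in> F" for v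
      using F(1) that by (intro Max_ge) auto
    from spec_norm_symmetric_le_net[OF \<open>transpose A = A\<close> _ _ F(2) net this]
    show ?thesis
      by (simp add: divide_simps)
  qed
  ultimately show thesis
    using that F(1,2) \<open>F \<noteq> {}\<close> by blast
qed

section \<open>Gaussian variables and sub-Gaussian maxima\<close>

lemma le_sqrt_if_le_div_add_mult:
  fixes x L b :: real
  assumes "0 < L" "0 \<le> b" and bound: "\<And>t. 0 < t \<Longrightarrow> x \<le> L / t + t * b / 2"
  shows "x \<le> sqrt (2 * L * b)"
proof (cases "b = 0")
  case True
  show ?thesis
  proof (rule ccontr)
    assume "\<not> ?thesis"
    then have "0 < x" using True by simp
    then have "x \<le> x / 2"
      using bound[of "2 * L / x"] True \<open>0 < L\<close> by (simp add: field_simps)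
    then show False using \<open>0 < x\<close> by simp
  qed
next
  case False
  then have "0 < b" using \<open>0 \<le> b\<close> by simp
  define r where "r = sqrt (2 * L * b)"
  have "0 < r" "r * r = 2 * L * b"
    using \<open>0 < L\<close> \<open>0 < b\<close> by (simp_all add: r_def)
  have "x \<le> L / (r / b) + (r / b) * b / 2"
    using bound[of "r / b"] \<open>0 < r\<close> \<open>0 < b\<close> by simp
  also have "\<dots> = r"
    using \<open>0 < b\<close> \<open>0 < r\<close> \<open>r * r = 2 * L * b\<close> by (simp add: field_simps)
  finally show ?thesis
    unfolding r_def .
qed

text \<open>This holds for every \<open>a\<close> since \<open>1 + y \<le> exp y\<close> at \<open>y = t * max - a\<close>; taking
  expectations and choosing \<open>exp a\<close> as a bound on the expected sum replaces Jensen's inequality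
  for \<open>ln\<close>.\<close>
lemma mult_Max_abs_le_sum_exp:
  fixes y :: "'i \<Rightarrow> real"
  assumes "finite F" "F \<noteq> {}" "0 < t"
  shows "t * (MAX v\<in>F. \<bar>y v\<bar>) \<le> (a - 1) + exp (- a) * (\<Sum>v\<in>F. exp (t * y v) + exp (- (t * y v)))"
proof -
  have "(MAX v\<in>F. \<bar>y v\<bar>) \<in> (\<lambda>v. \<bar>y v\<bar>) ` F"
    using assms(1,2) by (intro Max_in) auto
  then obtain v where v: "v \<in> F" "(MAX v\<in>F. \<bar>y v\<bar>) = \<bar>y v\<bar>"
    by auto
  have "exp (t * \<bar>y v\<bar>) \<le> exp (t * y v) + exp (- (t * y v))"
    using \<open>0 < t\<close> by (cases "y v \<ge> 0") (auto simp: add_increasing add_increasing2)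
  also have "\<dots> \<le> (\<Sum>v\<in>F. exp (t * y v) + exp (- (t * y v)))"
    using v(1) assms(1) by (intro member_le_sum) (auto intro: add_nonneg_nonneg)
  finally have "exp (t * (MAX v\<in>F. \<bar>y v\<bar>) - a) \<le> exp (- a) * (\<Sum>v\<in>F. exp (t * y v) + exp (- (t * y v)))"
    using v(2) by (simp add: exp_diff exp_minus divide_inverse mult.commute)
  then show ?thesis
    using exp_ge_add_one_self[of "t * (MAX v\<in>F. \<bar>y v\<bar>) - a"] by linarith
qed

text \<open>Completing the square shifts the mean of the density to \<open>\<mu> + t * \<sigma>\<^sup>2\<close>.\<close>
lemma normal_density_mgf:
  assumes "0 < \<sigma>"
  shows "has_bochner_integral lborel (\<lambda>x. normal_density \<mu> \<sigma> x * exp (t * (x - \<mu>)))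
           (exp (t\<^sup>2 * \<sigma>\<^sup>2 / 2))"
proof -
  have shift: "normal_density \<mu> \<sigma> x * exp (t * (x - \<mu>))
      = exp (t\<^sup>2 * \<sigma>\<^sup>2 / 2) * normal_density (\<mu> + t * \<sigma>\<^sup>2) \<sigma> x" for x
  proof -
    have "-(x - \<mu>)\<^sup>2 / (2 * \<sigma>\<^sup>2) + t * (x - \<mu>)
        = t\<^sup>2 * \<sigma>\<^sup>2 / 2 + -(x - (\<mu> + t * \<sigma>\<^sup>2))\<^sup>2 / (2 * \<sigma>\<^sup>2)"
      using assms by (simp add: field_simps power2_eq_square)
    then show ?thesis
      unfolding normal_density_def by (simp add: exp_add[symmetric] algebra_simps)
  qed
  have "has_bochner_integral lborel (normal_density (\<mu> + t * \<sigma>\<^sup>2) \<sigma>) 1"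
    using assms by (simp add: has_bochner_integral_iff integrable_normal_density integral_normal_density)
  then show ?thesis
    unfolding shift by (metis has_bochner_integral_mult_right mult.right_neutral)
qed

context prob_space
begin

lemma gaussian_rv_mgf:
  assumes "gaussian_rv M f"
  shows gaussian_rv_integrable: "integrable M f"
    and gaussian_rv_integrable_exp: "integrable M (\<lambda>\<omega>. exp (t * (f \<omega> - expectation f)))"
    and gaussian_rv_expectation_exp:
      "expectation (\<lambda>\<omega>. exp (t * (f \<omega> - expectation f))) = exp (t\<^sup>2 * variance f / 2)"
proof -
  have [measurable]: "f \<in> borel_measurable M"
    using assms unfolding gaussian_rv_def by auto
  consider (degenerate) c where "AE \<omega> in M. f \<omega> = c"
    | (normal) \<mu> \<sigma> where "0 < \<sigma>" "distributed M lborel f (normal_density \<mu> \<sigma>)"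
    using assms unfolding gaussian_rv_def by auto
  then have "integrable M f \<and> integrable M (\<lambda>\<omega>. exp (t * (f \<omega> - expectation f))) \<and>
      expectation (\<lambda>\<omega>. exp (t * (f \<omega> - expectation f))) = exp (t\<^sup>2 * variance f / 2)"
  proof cases
    case degenerate
    have "expectation f = c"
      using degenerate by (subst integral_cong_AE[of f M "\<lambda>_. c"]) (auto simp: prob_space)
    then have "AE \<omega> in M. exp (t * (f \<omega> - expectation f)) = 1" "variance f = 0"
      using degenerate by (auto simp: integral_cong_AE[of _ M "\<lambda>_. 0"])
    then show ?thesis
      using degenerate by (simp add: integrable_cong_AE[of _ M "\<lambda>_. c"]
          integrable_cong_AE[of _ M "\<lambda>_. 1"] integral_cong_AE[of _ M "\<lambda>_. 1"] prob_space)
  next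
    case normal
    have "expectation f = \<mu>" "variance f = \<sigma>\<^sup>2"
      using normal_distributed_expectation[OF normal] normal_distributed_variance[OF normal] by auto
    then show ?thesis
      using distributed_integrable[OF normal(2), of "\<lambda>x. x"] integrable_normal_moment_nz_1[OF normal(1)]
        distributed_integrable[OF normal(2), of "\<lambda>x. exp (t * (x - \<mu>))"]
        distributed_integral[OF normal(2), of "\<lambda>x. exp (t * (x - \<mu>))"]
        normal_density_mgf[OF normal(1), of \<mu> t]
      by (simp add: has_bochner_integral_iff)
  qed
  then show "integrable M f" "integrable M (\<lambda>\<omega>. exp (t * (f \<omega> - expectation f)))"
    "expectation (\<lambda>\<omega>. exp (t * (f \<omega> - expectation f))) = exp (t\<^sup>2 * variance f / 2)"
    by auto
qed

lemma expectation_Max_abs_le_ln_card: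
  fixes Y :: "'i \<Rightarrow> 'a \<Rightarrow> real"
  assumes "finite F" "F \<noteq> {}" "0 < t"
    and integrable: "\<And>v. v \<in> F \<Longrightarrow> integrable M (Y v)"
    and integrable_exp: "\<And>v t. v \<in> F \<Longrightarrow> integrable M (\<lambda>\<omega>. exp (t * Y v \<omega>))"
    and mgf: "\<And>v t. v \<in> F \<Longrightarrow> expectation (\<lambda>\<omega>. exp (t * Y v \<omega>)) \<le> exp (t\<^sup>2 * s / 2)"
  shows "expectation (\<lambda>\<omega>. MAX v\<in>F. \<bar>Y v \<omega>\<bar>) \<le> ln (2 * real (card F)) / t + t * s / 2"
proof -
  define S where "S \<omega> = (\<Sum>v\<in>F. exp (t * Y v \<omega>) + exp (- (t * Y v \<omega>)))" for \<omega>
  define a where "a = ln (2 * real (card F)) + t\<^sup>2 * s / 2"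
  have "card F > 0"
    using assms(1,2) by (simp add: card_gt_0_iff)
  have integrable_pm: "integrable M (\<lambda>\<omega>. exp (t * Y v \<omega>))" "integrable M (\<lambda>\<omega>. exp (- (t * Y v \<omega>)))"
    and mgf_pm: "expectation (\<lambda>\<omega>. exp (t * Y v \<omega>)) \<le> exp (t\<^sup>2 * s / 2)"
      "expectation (\<lambda>\<omega>. exp (- (t * Y v \<omega>))) \<le> exp (t\<^sup>2 * s / 2)" if "v \<in> F" for v
    using integrable_exp[OF that, of t] integrable_exp[OF that, of "- t"]
      mgf[OF that, of t] mgf[OF that, of "- t"] by simp_all
  have integrable_S: "integrable M S"
    unfolding S_def using integrable_pm by auto
  have "expectation S = (\<Sum>v\<in>F. expectation (\<lambda>\<omega>. exp (t * Y v \<omega>))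
      + expectation (\<lambda>\<omega>. exp (- (t * Y v \<omega>))))"
    unfolding S_def using integrable_pm
    by (simp add: Bochner_Integration.integral_sum Bochner_Integration.integral_add)
  also have "\<dots> \<le> (\<Sum>v\<in>F. exp (t\<^sup>2 * s / 2) + exp (t\<^sup>2 * s / 2))"
    using mgf_pm by (intro sum_mono add_mono) auto
  also have "\<dots> = exp a"
    using \<open>card F > 0\<close> by (simp add: a_def exp_add)
  finally have expectation_S: "expectation S \<le> exp a" .
  have "t * expectation (\<lambda>\<omega>. MAX v\<in>F. \<bar>Y v \<omega>\<bar>) = expectation (\<lambda>\<omega>. t * (MAX v\<in>F. \<bar>Y v \<omega>\<bar>))"
    by simp
  also have "\<dots> \<le> expectation (\<lambda>\<omega>. (a - 1) + exp (- a) * S \<omega>)"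
    using mult_Max_abs_le_sum_exp[OF assms(1-3)] integrable_S assms(1,2) integrable unfolding S_def
    by (intro integral_mono integrable_MAX integrable_mult_right integrable_abs) auto
  also have "\<dots> = (a - 1) + exp (- a) * expectation S"
    using integrable_S by (simp add: prob_space)
  also have "\<dots> \<le> a"
    using expectation_S by (simp add: exp_minus field_simps)
  finally show ?thesis
    using \<open>0 < t\<close> unfolding a_def by (simp add: field_simps power2_eq_square)
qed

lemma expectation_Max_abs_le_sqrt_ln_card:
  fixes Y :: "'i \<Rightarrow> 'a \<Rightarrow> real"
  assumes "finite F" "F \<noteq> {}" "0 \<le> s"
    and "\<And>v. v \<in> F \<Longrightarrow> integrable M (Y v)"
    and "\<And>v t. v \<in> F \<Longrightarrow> integrable M (\<lambda>\<omega>. exp (t * Y v \<omega>))"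
    and "\<And>v t. v \<in> F \<Longrightarrow> expectation (\<lambda>\<omega>. exp (t * Y v \<omega>)) \<le> exp (t\<^sup>2 * s / 2)"
  shows "expectation (\<lambda>\<omega>. MAX v\<in>F. \<bar>Y v \<omega>\<bar>) \<le> sqrt (2 * ln (2 * real (card F)) * s)"
proof (rule le_sqrt_if_le_div_add_mult[OF _ \<open>0 \<le> s\<close>])
  have "card F \<ge> 1"
    using assms(1,2) by (simp add: Suc_leI card_gt_0_iff)
  then show "0 < ln (2 * real (card F))"
    by simp
  show "expectation (\<lambda>\<omega>. MAX v\<in>F. \<bar>Y v \<omega>\<bar>) \<le> ln (2 * real (card F)) / t + t * s / 2" if "0 < t" for t
    using expectation_Max_abs_le_ln_card[OF assms(1,2) that assms(4-)] .
qed

end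

section \<open>Gaussian random matrices\<close>

lemma quadratic_form_eq_sum:
  fixes A :: "real^'n^'n"
  shows "v \<bullet> (A *v v) = (\<Sum>i\<in>UNIV. \<Sum>j\<in>UNIV. (v$i * v$j) * A$i$j)"
  by (simp add: inner_vec_def matrix_vector_mult_def sum_distrib_left mult_ac)

lemma gaussian_matrix_quadratic_form:
  fixes Z :: "'a \<Rightarrow> real^'n^'n"
  assumes "gaussian_matrix M Z"
  shows "gaussian_rv M (\<lambda>\<omega>. v \<bullet> (Z \<omega> *v v))"
proof -
  have "gaussian_rv M (\<lambda>\<omega>. \<Sum>i\<in>UNIV. \<Sum>j\<in>UNIV. (\<chi> i j. v$i * v$j) $ i $ j * Z \<omega> $ i $ j)"
    using assms unfolding gaussian_matrix_def by blast
  then show ?thesis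
    by (simp add: quadratic_form_eq_sum)
qed

lemma gaussian_matrix_entry:
  fixes Z :: "'a \<Rightarrow> real^'n^'m"
  assumes "gaussian_matrix M Z"
  shows "gaussian_rv M (\<lambda>\<omega>. Z \<omega> $ i $ j)"
proof -
  have "gaussian_rv M (\<lambda>\<omega>. \<Sum>k\<in>UNIV. \<Sum>l\<in>UNIV. (\<chi> k l. if k = i \<and> l = j then 1 else 0) $ k $ l * Z \<omega> $ k $ l)"
    using assms unfolding gaussian_matrix_def by blast
  moreover have "(\<Sum>k\<in>UNIV. \<Sum>l\<in>UNIV. (\<chi> k l. if k = i \<and> l = j then 1 else 0) $ k $ l * A $ k $ l) = A $ i $ j"
    for A :: "real^'n^'m"
  proof -
    have "(\<Sum>l\<in>UNIV. (\<chi> k l. if k = i \<and> l = j then 1 else 0) $ k $ l * A $ k $ l)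
        = (if k = i then A $ i $ j else 0)" for k
      by (cases "k = i") (simp_all add: if_distrib[of "\<lambda>x. x * _"] cong: if_cong)
    then show ?thesis
      by simp
  qed
  ultimately show ?thesis
    by simp
qed

lemma integrable_matrixI:
  fixes Z :: "'a \<Rightarrow> real^'n^'m"
  assumes "Z \<in> borel_measurable M" and entries: "\<And>i j. integrable M (\<lambda>\<omega>. Z \<omega> $ i $ j)"
  shows "integrable M Z"
proof (rule Bochner_Integration.integrable_bound[OF _ assms(1)])
  show "integrable M (\<lambda>\<omega>. \<Sum>i\<in>UNIV. \<Sum>j\<in>UNIV. \<bar>Z \<omega> $ i $ j\<bar>)"
    using entries by auto
  have "norm (Z \<omega>) \<le> (\<Sum>i\<in>UNIV. \<Sum>j\<in>UNIV. \<bar>Z \<omega> $ i $ j\<bar>)" for \<omega>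
  proof -
    have "norm (Z \<omega>) \<le> (\<Sum>i\<in>UNIV. norm (Z \<omega> $ i))"
      unfolding norm_vec_def by (rule L2_set_le_sum) simp
    also have "\<dots> \<le> (\<Sum>i\<in>UNIV. \<Sum>j\<in>UNIV. \<bar>Z \<omega> $ i $ j\<bar>)"
      by (intro sum_mono norm_le_l1_cart)
    finally show ?thesis .
  qed
  then show "AE \<omega> in M. norm (Z \<omega>) \<le> norm (\<Sum>i\<in>UNIV. \<Sum>j\<in>UNIV. \<bar>Z \<omega> $ i $ j\<bar>)"
    by (intro AE_I2) (simp add: sum_nonneg)
qed

context prob_space
begin

lemma gaussian_matrix_integrable:
  assumes "gaussian_matrix M Z"
  shows "integrable M Z"
  using assms gaussian_rv_integrable[OF gaussian_matrix_entry[OF assms]]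
  by (intro integrable_matrixI) (auto simp: gaussian_matrix_def)

lemma expectation_matrix_entry:
  fixes Z :: "'a \<Rightarrow> real^'n^'m"
  assumes "integrable M Z"
  shows "expectation Z $ i $ j = expectation (\<lambda>\<omega>. Z \<omega> $ i $ j)"
proof -
  have "bounded_linear (\<lambda>A :: real^'n^'m. A $ i $ j)"
    using bounded_linear_compose[OF bounded_linear_vec_nth[of j] bounded_linear_vec_nth[of i]]
    by (simp add: comp_def)
  from integral_bounded_linear[OF this assms] show ?thesis
    by (rule sym)
qed

lemma transpose_expectation_symmetric:
  fixes Z :: "'a \<Rightarrow> real^'n^'n"
  assumes "integrable M Z" and "\<And>\<omega>. \<omega> \<in> space M \<Longrightarrow> transpose (Z \<omega>) = Z \<omega>"
  shows "transpose (expectation Z) = expectation Z"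
proof -
  have "Z \<omega> $ j $ i = Z \<omega> $ i $ j" if "\<omega> \<in> space M" for \<omega> i j
    using arg_cong[OF assms(2)[OF that], of "\<lambda>A. A $ i $ j"] by (simp add: transpose_def)
  then show ?thesis
    unfolding vec_eq_iff transpose_def expectation_matrix_entry[OF assms(1)]
    by (auto intro: Bochner_Integration.integral_cong)
qed

lemma expectation_quadratic_form:
  fixes Z :: "'a \<Rightarrow> real^'n^'n"
  assumes "integrable M Z"
  shows "expectation (\<lambda>\<omega>. v \<bullet> (Z \<omega> *v v)) = v \<bullet> (expectation Z *v v)"
proof (rule integral_bounded_linear[OF _ assms])
  show "bounded_linear (\<lambda>A :: real^'n^'n. v \<bullet> (A *v v))"
  proof (rule linear_conv_bounded_linear[THEN iffD1], rule linearI)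
    fix A B :: "real^'n^'n" and c :: real
    show "v \<bullet> ((A + B) *v v) = v \<bullet> (A *v v) + v \<bullet> (B *v v)"
      by (simp add: matrix_vector_mult_add_rdistrib inner_add_right)
    show "v \<bullet> ((c *\<^sub>R A) *v v) = c *\<^sub>R (v \<bullet> (A *v v))"
      by (simp add: quadratic_form_eq_sum sum_distrib_left mult_ac)
  qed
qed

lemma gaussian_matrix_centered_quadratic_form:
  fixes Z :: "'a \<Rightarrow> real^'n^'n"
  assumes "gaussian_matrix M Z" and variance: "variance (\<lambda>\<omega>. v \<bullet> (Z \<omega> *v v)) \<le> s"
  defines "Y \<equiv> \<lambda>\<omega>. v \<bullet> ((Z \<omega> - expectation Z) *v v)"
  shows "integrable M Y"
    and "integrable M (\<lambda>\<omega>. exp (t * Y \<omega>))"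
    and "expectation (\<lambda>\<omega>. exp (t * Y \<omega>)) \<le> exp (t\<^sup>2 * s / 2)"
proof -
  define f where "f = (\<lambda>\<omega>. v \<bullet> (Z \<omega> *v v))"
  have f: "gaussian_rv M f"
    unfolding f_def by (rule gaussian_matrix_quadratic_form[OF assms(1)])
  have "Y = (\<lambda>\<omega>. f \<omega> - expectation f)"
    using expectation_quadratic_form[OF gaussian_matrix_integrable[OF assms(1)]]
    by (simp add: Y_def f_def fun_eq_iff matrix_vector_mult_diff_rdistrib inner_diff_right)
  moreover have "exp (t\<^sup>2 * variance f / 2) \<le> exp (t\<^sup>2 * s / 2)"
    using variance by (simp add: f_def mult_left_mono)
  ultimately show "integrable M Y" "integrable M (\<lambda>\<omega>. exp (t * Y \<omega>))"
    "expectation (\<lambda>\<omega>. exp (t * Y \<omega>)) \<le> exp (t\<^sup>2 * s / 2)"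
    using gaussian_rv_integrable[OF f] gaussian_rv_integrable_exp[OF f, of t]
      gaussian_rv_expectation_exp[OF f, of t] by auto
qed

lemma expectation_Max_centered_quadratic_form:
  fixes Z :: "'a \<Rightarrow> real^'n^'n"
  assumes "gaussian_matrix M Z" "finite F" "F \<noteq> {}" "0 \<le> s"
    and variance: "\<And>v. v \<in> F \<Longrightarrow> variance (\<lambda>\<omega>. v \<bullet> (Z \<omega> *v v)) \<le> s"
  defines "m \<equiv> \<lambda>\<omega>. MAX v\<in>F. \<bar>v \<bullet> ((Z \<omega> - expectation Z) *v v)\<bar>"
  shows "integrable M m" and "expectation m \<le> sqrt (2 * ln (2 * real (card F)) * s)"
proof -
  note Y = gaussian_matrix_centered_quadratic_form[OF assms(1) variance]
  show "integrable M m"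
    unfolding m_def using Y(1) assms(2,3) by (intro integrable_MAX integrable_abs) auto
  show "expectation m \<le> sqrt (2 * ln (2 * real (card F)) * s)"
    unfolding m_def using assms(2,3,4) Y by (rule expectation_Max_abs_le_sqrt_ln_card)
qed

end

lemma sigma_star_sq_le:
  fixes Z :: "'a \<Rightarrow> real^'n^'n"
  assumes "\<And>u. norm u = 1 \<Longrightarrow> prob_space.variance M (\<lambda>\<omega>. u \<bullet> (Z \<omega> *v u)) \<le> b"
  shows "sigma_star_sq M Z \<le> b"
  unfolding sigma_star_sq_def
proof (rule cSUP_least)
  obtain u :: "real^'n" where "norm u = 1"
    using vector_choose_size[of 1] by auto
  then show "{u :: real^'n. norm u = 1} \<noteq> {}"
    by auto
qed (use assms in auto)

lemma sqrt_ln_net_card_le: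
  fixes n d :: nat
  assumes "1 \<le> d" "1 \<le> n" "real n \<le> 32 ^ d" "0 \<le> b"
  shows "31/27 * sqrt (2 * ln (2 * real n) * b) \<le> sqrt (12 * b * real d)"
proof -
  have "exp (3/4 :: real) \<ge> 2"
    using exp_lower_Taylor_quadratic[of "3/4 :: real"] by (simp add: power2_eq_square)
  then have ln2: "ln (2 :: real) \<le> 3/4"
    by (metis exp_gt_zero ln_exp ln_le_cancel_iff zero_less_numeral)
  have "ln (2 * real n) \<le> ln (2 ^ (5 * d + 1))"
    using assms(2,3) by (simp add: power_mult)
  also have "\<dots> = real (5 * d + 1) * ln 2"
    by (rule ln_realpow)
  also have "\<dots> \<le> real (5 * d + 1) * (3/4)"
    using ln2 by (intro mult_left_mono) auto
  finally have "(31/27)\<^sup>2 * (2 * ln (2 * real n)) \<le> 12 * real d"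
    using assms(1) by (simp add: power2_eq_square)
  then have "(31/27)\<^sup>2 * (2 * ln (2 * real n) * b) \<le> 12 * b * real d"
    using mult_right_mono[OF _ assms(4)] by (fastforce simp: mult_ac)
  then have "sqrt ((31/27)\<^sup>2 * (2 * ln (2 * real n) * b)) \<le> sqrt (12 * b * real d)"
    by (rule real_sqrt_le_mono)
  then show ?thesis
    by (simp add: real_sqrt_mult)
qed

theorem lemma5p3:
  fixes M :: "'a measure" and Z :: "'a \<Rightarrow> real^'d^'d" and \<beta> :: real
  assumes "prob_space M"
    and "gaussian_matrix M Z"
    and "\<And>\<omega>. \<omega> \<in> space M \<Longrightarrow> transpose (Z \<omega>) = Z \<omega>"
    and "\<And>a :: real^'d. prob_space.variance M (\<lambda>\<omega>. a \<bullet> (Z \<omega> *v a)) \<le> \<beta>\<^sup>2 * norm a ^ 4"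
  shows "prob_space.expectation M (\<lambda>\<omega>. spec_norm (Z \<omega> - prob_space.expectation M Z))
           \<le> sqrt (12 * \<beta>\<^sup>2 * real CARD('d))
         \<and> sigma_star_sq M Z \<le> \<beta>\<^sup>2"
proof -
  interpret prob_space M by fact
  define X where "X \<omega> = Z \<omega> - expectation Z" for \<omega>
  have X_symmetric: "transpose (X \<omega>) = X \<omega>" if "\<omega> \<in> space M" for \<omega>
    using assms(3)[OF that] transpose_expectation_symmetric[OF gaussian_matrix_integrable[OF assms(2)] assms(3)]
    by (simp add: X_def vec_eq_iff transpose_def)
  have unit_variance: "variance (\<lambda>\<omega>. u \<bullet> (Z \<omega> *v u)) \<le> \<beta>\<^sup>2" if "norm u = 1" for u :: "real^'d"
    using assms(4)[of u] that by simp
  obtain F :: "(real^'d) set" where F: "finite F" "F \<noteq> {}" "F \<subseteq> sphere 0 1" "real (card F) \<le> 32 ^ CARD('d)"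
    and spec_norm_le: "\<And>A. transpose A = A \<Longrightarrow> spec_norm A \<le> 31/27 * (MAX v\<in>F. \<bar>v \<bullet> (A *v v)\<bar>)"
    using obtain_spec_norm_net by blast
  define m where "m \<omega> = (MAX v\<in>F. \<bar>v \<bullet> (X \<omega> *v v)\<bar>)" for \<omega>
  have "variance (\<lambda>\<omega>. v \<bullet> (Z \<omega> *v v)) \<le> \<beta>\<^sup>2" if "v \<in> F" for v
    using unit_variance F(3) that by auto
  note m = expectation_Max_centered_quadratic_form[OF assms(2) F(1,2) zero_le_power2 this]
  have "integrable M m" and expectation_m: "expectation m \<le> sqrt (2 * ln (2 * real (card F)) * \<beta>\<^sup>2)"
    using m unfolding m_def X_def by auto
  have spec_norm_X: "spec_norm (X \<omega>) \<le> 31/27 * m \<omega>" if "\<omega> \<in> space M" for \<omega>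
    unfolding m_def by (rule spec_norm_le[OF X_symmetric[OF that]])
  \<comment> \<open>No integrability of the spectral norm is needed: otherwise its expectation is \<open>0\<close>.\<close>
  have "expectation (\<lambda>\<omega>. spec_norm (X \<omega>)) \<le> expectation (\<lambda>\<omega>. 31/27 * m \<omega>)"
    using \<open>integrable M m\<close> spec_norm_X order_trans[OF spec_norm_nonneg spec_norm_X]
    by (intro integral_mono') auto
  also have "\<dots> \<le> 31/27 * sqrt (2 * ln (2 * real (card F)) * \<beta>\<^sup>2)"
    using expectation_m by simp
  also have "\<dots> \<le> sqrt (12 * \<beta>\<^sup>2 * real CARD('d))"
    using F(1,2,4) by (intro sqrt_ln_net_card_le) (auto simp: Suc_leI card_gt_0_iff)
  finally show ?thesis
    using sigma_star_sq_le[OF unit_variance] unfolding X_def by simp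
qed

end
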